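(* Let $X\sim\mathrm{Gamma}(\alpha,\lambda)$ with $\alpha,\lambda>0$, and let $m\geqslant 2$ be an integer. Then the extended upper Gini index of $X$ is \[ IG_{m;\max}=\frac{1}{m}\left[\frac{1}{\alpha}\int_0^\infty\left\{1-\frac{\gamma^m(\alpha,t)}{\Gamma^m(\alpha)}\right\}{\rm d}t-1\right]. \]
   Context: $\mathrm{Gamma}(\alpha,\lambda)$ denotes the distribution with density $\lambda^\alpha x^{\alpha-1}e^{-\lambda x}/\Gamma(\alpha)$ for $x>0$ (shape $\alpha$, rate $\lambda$), with mean $\mu=\alpha/\lambda$. $\gamma(\alpha,t)=\int_0^t s^{\alpha-1}e^{-s}\,{\rm d}s$ is the lower incomplete gamma function. For i.i.d. copies $X_1,\ldots,X_m$ of $X$, $IG_{m;\max}=\dfrac{\mathbb{E}[\max\{X_1,\ldots,X_m\}-X_1]}{m\mu}$. *)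

theory Defs
  imports "HOL-Probability.Probability"
begin

definition gamma_density :: "real \<Rightarrow> real \<Rightarrow> real \<Rightarrow> real" where
  "gamma_density alpha lam x =
     (if x > 0 then lam powr alpha * x powr (alpha - 1) * exp (- lam * x) / Gamma alpha else 0)"

definition gamma_measure :: "real \<Rightarrow> real \<Rightarrow> real measure" where
  "gamma_measure alpha lam = density lborel (\<lambda>x. ennreal (gamma_density alpha lam x))"

definition lower_inc_gamma :: "real \<Rightarrow> real \<Rightarrow> real" where
  "lower_inc_gamma a t = (LBINT s=0..t. s powr (a - 1) * exp (- s))"

text \<open>Extended upper Gini index: X_1,...,X_m i.i.d. with law D (product measure,
  indices 0..m-1, X_1 is coordinate 0), mu the mean of D.\<close>
definition IG_max :: "nat \<Rightarrow> real measure \<Rightarrow> real" where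
  "IG_max m D =
     (\<integral>x. (Max (x ` {..<m}) - x 0) \<partial>(PiM {..<m} (\<lambda>_. D)))
       / (real m * (\<integral>x. x \<partial>D))"

end

theory Submission
  imports Defs
begin

text \<open>
  For i.i.d. copies \<open>X\<^sub>i\<close> of a nonnegative random variable with \<open>F(t) = P(X < t)\<close>, the event
  \<open>max X\<^sub>i < t\<close> is a product event, so by the layer-cake formula
  \<open>E[max X\<^sub>i] = \<integral>\<^sub>0\<^sup>\<infinity> P(max X\<^sub>i \<ge> t) dt = \<integral>\<^sub>0\<^sup>\<infinity> (1 - F(t)\<^sup>m) dt\<close>.
  For the Gamma law, \<open>F(t) = \<gamma>(\<alpha>, \<lambda>t) / \<Gamma>(\<alpha>)\<close> and the mean is \<open>\<alpha>/\<lambda>\<close>; the substitution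
  \<open>s = \<lambda>t\<close> and \<open>E[max X\<^sub>i - X\<^sub>1] = E[max X\<^sub>i] - \<alpha>/\<lambda>\<close> then give the formula.
\<close>

lemma nn_integral_powr_exp:
  fixes b l :: real
  assumes b: "b > 0" and l: "l > 0"
  shows "(\<integral>\<^sup>+x. ennreal (indicator {0<..} x * (x powr (b - 1) * exp (- l * x))) \<partial>lborel)
    = ennreal (Gamma b / l powr b)"
proof -
  let ?g = "\<lambda>s::real. ennreal (indicator {0<..} s * (s powr (b - 1) / exp s))"
  let ?I = "\<integral>\<^sup>+x. ennreal (indicator {0<..} x * (x powr (b - 1) * exp (- l * x))) \<partial>lborel"
  have "(\<lambda>s. ennreal (indicator {0..} s * (s powr (b - 1) / exp s))) = ?g"
    by (auto simp: fun_eq_iff indicator_def)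
  then have "ennreal (Gamma b) = (\<integral>\<^sup>+s. ?g s \<partial>lborel)"
    using nn_integral_has_integral_lebesgue[of "{0..}" "\<lambda>t. t powr (b - 1) / exp t" "Gamma b"]
      Gamma_integral_real[OF b] by simp
  also have "\<dots> = l * (\<integral>\<^sup>+x. ?g (0 + l * x) \<partial>lborel)"
    using nn_integral_real_affine[of ?g l 0] l by simp
  also have "(\<lambda>x. ?g (0 + l * x)) = (\<lambda>x. ennreal (l powr (b - 1))
      * ennreal (indicator {0<..} x * (x powr (b - 1) * exp (- l * x))))"
    using l by (auto simp: fun_eq_iff indicator_def powr_mult exp_minus field_simps
      zero_less_mult_iff ennreal_mult'[symmetric])
  also have "(\<integral>\<^sup>+x. ennreal (l powr (b - 1))
      * ennreal (indicator {0<..} x * (x powr (b - 1) * exp (- l * x))) \<partial>lborel)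
      = ennreal (l powr (b - 1)) * ?I"
    by (rule nn_integral_cmult) measurable
  finally have "ennreal (Gamma b) = ennreal (l powr b) * ?I"
    using l by (simp add: mult.assoc[symmetric] ennreal_mult'[symmetric] powr_add[symmetric]
      powr_mult_base)
  then have "ennreal (1 / l powr b) * ennreal (Gamma b) = ?I"
    using l by (simp add: mult.assoc[symmetric] ennreal_mult'[symmetric])
  then show ?thesis
    using l by (simp add: ennreal_mult'[symmetric])
qed

lemma gamma_density_eq:
  "gamma_density a l x = l powr a / Gamma a * (indicator {0<..} x * (x powr (a - 1) * exp (- l * x)))"
  by (simp add: gamma_density_def indicator_def)

lemma gamma_density_nonneg: "a > 0 \<Longrightarrow> 0 \<le> gamma_density a l x"
  using Gamma_real_pos[of a] by (simp add: gamma_density_def)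

lemma borel_measurable_gamma_density [measurable]: "gamma_density a l \<in> borel_measurable borel"
  unfolding gamma_density_def by measurable

lemma nn_integral_gamma_density_times_power:
  fixes a l :: real and k :: nat
  assumes a: "a > 0" and l: "l > 0"
  shows "(\<integral>\<^sup>+x. ennreal (gamma_density a l x * x ^ k) \<partial>lborel)
    = ennreal (Gamma (a + k) / (Gamma a * l ^ k))"
proof -
  have "(\<integral>\<^sup>+x. ennreal (gamma_density a l x * x ^ k) \<partial>lborel)
      = (\<integral>\<^sup>+x. ennreal (l powr a / Gamma a)
          * ennreal (indicator {0<..} x * (x powr ((a + k) - 1) * exp (- l * x))) \<partial>lborel)"
    using a Gamma_real_pos[OF a]
    by (intro nn_integral_cong) (auto simp: gamma_density_eq ennreal_mult'[symmetric]
      indicator_def powr_realpow[symmetric] powr_add[symmetric] add_diff_eq diff_add_eq)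
  also have "\<dots> = ennreal (l powr a / Gamma a)
      * (\<integral>\<^sup>+x. ennreal (indicator {0<..} x * (x powr ((a + k) - 1) * exp (- l * x))) \<partial>lborel)"
    by (rule nn_integral_cmult) measurable
  also have "\<dots> = ennreal (l powr a / Gamma a) * ennreal (Gamma (a + k) / l powr (a + k))"
    using nn_integral_powr_exp[of "a + k" l] a l by simp
  also have "\<dots> = ennreal (Gamma (a + k) / (Gamma a * l ^ k))"
    using a l Gamma_real_pos[OF a]
    by (simp add: ennreal_mult'[symmetric] powr_add powr_realpow)
  finally show ?thesis .
qed

lemma sets_gamma_measure [measurable_cong]: "sets (gamma_measure a l) = sets borel"
  by (simp add: gamma_measure_def)

lemma space_gamma_measure: "space (gamma_measure a l) = UNIV"
  by (simp add: gamma_measure_def)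

lemma prob_space_gamma_measure:
  assumes "a > 0" and "l > 0"
  shows "prob_space (gamma_measure a l)"
proof (rule prob_spaceI)
  show "emeasure (gamma_measure a l) (space (gamma_measure a l)) = 1"
    using nn_integral_gamma_density_times_power[OF assms, of 0] Gamma_real_pos[OF assms(1)]
    by (simp add: gamma_measure_def emeasure_density)
qed

lemma AE_gamma_measure_nonneg: "AE x in gamma_measure a l. 0 \<le> x"
  unfolding gamma_measure_def by (subst AE_density) (auto simp: gamma_density_def)

lemma has_bochner_integral_gamma_measure_id:
  assumes a: "a > 0" and l: "l > 0"
  shows "has_bochner_integral (gamma_measure a l) (\<lambda>x. x) (a / l)"
proof (rule has_bochner_integral_nn_integral)
  show "AE x in gamma_measure a l. 0 \<le> x"
    by (rule AE_gamma_measure_nonneg)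
  have "Gamma (a + 1) = a * Gamma a"
    using a by (intro Gamma_plus1) (auto elim!: nonpos_Ints_cases)
  moreover have "(\<integral>\<^sup>+x. ennreal x \<partial>gamma_measure a l)
      = (\<integral>\<^sup>+x. ennreal (gamma_density a l x * x ^ 1) \<partial>lborel)"
    unfolding gamma_measure_def
    by (subst nn_integral_density) (auto simp: ennreal_mult' gamma_density_nonneg[OF a])
  ultimately show "(\<integral>\<^sup>+x. ennreal x \<partial>gamma_measure a l) = ennreal (a / l)"
    using nn_integral_gamma_density_times_power[OF a l, of 1] Gamma_real_pos[OF a] by simp
qed (use a l in auto)

lemma measure_gamma_measure_lessThan:
  assumes a: "a > 0" and l: "l > 0" and u: "u \<ge> 0"
  shows "measure (gamma_measure a l) {..<u} = lower_inc_gamma a (l * u) / Gamma a"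
proof -
  let ?k = "\<lambda>x. indicator {0<..<u} x * (x powr (a - 1) * exp (- l * x))"
  have "lower_inc_gamma a (l * u) = (\<integral>s. indicator {0<..<l * u} s * (s powr (a - 1) * exp (- s)) \<partial>lborel)"
    using l u by (simp add: lower_inc_gamma_def interval_lebesgue_integral_def
      set_lebesgue_integral_def einterval_def greaterThanLessThan_def greaterThan_def
      lessThan_def Int_def)
  also have "\<dots> = l * (\<integral>x. indicator {0<..<l * u} (0 + l * x)
      * ((0 + l * x) powr (a - 1) * exp (- (0 + l * x))) \<partial>lborel)"
    using lborel_integral_real_affine[of l "\<lambda>s. indicator {0<..<l * u} s * (s powr (a - 1) * exp (- s))" 0] l
    by simp
  also have "(\<lambda>x. indicator {0<..<l * u} (0 + l * x) * ((0 + l * x) powr (a - 1) * exp (- (0 + l * x))))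
      = (\<lambda>x. l powr (a - 1) * ?k x)"
    using l by (auto simp: fun_eq_iff indicator_def powr_mult zero_less_mult_iff)
  also have "l * (\<integral>x. l powr (a - 1) * ?k x \<partial>lborel) = l * l powr (a - 1) * (\<integral>x. ?k x \<partial>lborel)"
    by simp
  also have "l * l powr (a - 1) = l powr a"
    using l by (simp add: powr_diff)
  also have "(\<integral>x. ?k x \<partial>lborel) = Gamma a / l powr a * measure (gamma_measure a l) {..<u}"
  proof -
    have "measure (gamma_measure a l) {..<u} = (\<integral>x. indicator {..<u} x \<partial>gamma_measure a l)"
      by (simp add: space_gamma_measure)
    also have "\<dots> = (\<integral>x. gamma_density a l x * indicator {..<u} x \<partial>lborel)"
      unfolding gamma_measure_def by (subst integral_density) (auto simp: gamma_density_nonneg[OF a])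
    also have "(\<lambda>x. gamma_density a l x * indicator {..<u} x) = (\<lambda>x. l powr a / Gamma a * ?k x)"
      by (auto simp: fun_eq_iff gamma_density_eq indicator_def)
    finally show ?thesis
      using l Gamma_real_pos[OF a] by (simp add: field_simps)
  qed
  finally show ?thesis
    using l Gamma_real_pos[OF a] by (simp add: field_simps)
qed

lemma (in sigma_finite_measure) nn_integral_eq_nn_integral_tail:
  assumes [measurable]: "f \<in> borel_measurable M"
  shows "(\<integral>\<^sup>+x. ennreal (f x) \<partial>M) = (\<integral>\<^sup>+t\<in>{0<..}. emeasure M {x \<in> space M. t \<le> f x} \<partial>lborel)"
proof -
  interpret pair_sigma_finite M lborel
    by (intro pair_sigma_finite.intro sigma_finite_measure_axioms lborel.sigma_finite_measure_axioms)
  have "(\<integral>\<^sup>+x. ennreal (f x) \<partial>M) = (\<integral>\<^sup>+x. (\<integral>\<^sup>+t. indicator {0<..f x} t \<partial>lborel) \<partial>M)"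
  proof (intro nn_integral_cong)
    fix x
    show "ennreal (f x) = (\<integral>\<^sup>+t. indicator {0<..f x} t \<partial>lborel)"
      by (cases "0 \<le> f x") (auto simp: ennreal_neg)
  qed
  also have "\<dots> = (\<integral>\<^sup>+t. (\<integral>\<^sup>+x. indicator {0<..f x} t \<partial>M) \<partial>lborel)"
  proof -
    have "(\<lambda>p. indicator {0<..f (fst p)} (snd p) :: ennreal)
        = (\<lambda>p. if 0 < snd p \<and> snd p \<le> f (fst p) then 1 else 0)"
      by (auto simp: fun_eq_iff indicator_def)
    then have "(\<lambda>(x, t). indicator {0<..f x} t :: ennreal) \<in> borel_measurable (M \<Otimes>\<^sub>M lborel)"
      by (simp add: case_prod_beta')
    then show ?thesis
      using Fubini'[of "\<lambda>x t. indicator {0<..f x} t"] by simp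
  qed
  also have "\<dots> = (\<integral>\<^sup>+t\<in>{0<..}. emeasure M {x \<in> space M. t \<le> f x} \<partial>lborel)"
  proof (intro nn_integral_cong)
    fix t :: real
    have "(\<integral>\<^sup>+x. indicator {0<..f x} t \<partial>M) = (\<integral>\<^sup>+x. indicator {0<..} t * indicator {x \<in> space M. t \<le> f x} x \<partial>M)"
      by (intro nn_integral_cong) (auto simp: indicator_def)
    also have "\<dots> = indicator {0<..} t * emeasure M {x \<in> space M. t \<le> f x}"
      by (subst nn_integral_cmult) auto
    finally show "(\<integral>\<^sup>+x. indicator {0<..f x} t \<partial>M) = emeasure M {x \<in> space M. t \<le> f x} * indicator {0<..} t"
      by (simp add: mult.commute)
  qed
  finally show ?thesis .
qed

lemma has_bochner_integral_PiM_component: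
  fixes f :: "'a \<Rightarrow> 'b::{banach, second_countable_topology}"
  assumes "prob_space M" and "i \<in> I" and [measurable]: "f \<in> borel_measurable M"
    and "has_bochner_integral M f c"
  shows "has_bochner_integral (PiM I (\<lambda>_. M)) (\<lambda>x. f (x i)) c"
proof -
  have [measurable]: "(\<lambda>x. x i) \<in> measurable (PiM I (\<lambda>_. M)) M"
    using \<open>i \<in> I\<close> by (rule measurable_component_singleton)
  have "has_bochner_integral (distr (PiM I (\<lambda>_. M)) M (\<lambda>x. x i)) f c"
    using distr_PiM_component[of I "\<lambda>_. M" i] assms by simp
  then show ?thesis
    by (simp add: has_bochner_integral_iff integrable_distr_eq integral_distr)
qed

lemma measure_PiM_Max_less:
  fixes M :: "real measure"
  assumes "prob_space M" and I: "finite I" "I \<noteq> {}" and M: "sets M = sets borel"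
  shows "measure (PiM I (\<lambda>_. M)) {x \<in> space (PiM I (\<lambda>_. M)). Max (x ` I) < t}
    = measure M {..<t} ^ card I"
proof -
  interpret prob_space M by fact
  interpret finite_product_prob_space "\<lambda>_. M" I
    using I(1) by unfold_locales
  have "{x \<in> space (PiM I (\<lambda>_. M)). Max (x ` I) < t} = PiE I (\<lambda>_. {..<t})"
    using I sets_eq_imp_space_eq[OF M] by (auto simp: space_PiM PiE_iff extensional_def)
  then show ?thesis
    using M by (simp add: finite_measure_PiM_emb)
qed

lemma borel_measurable_PiM_Max:
  fixes M :: "real measure"
  assumes "finite I" and "sets M = sets borel"
  shows "(\<lambda>x. Max (x ` I)) \<in> borel_measurable (PiM I (\<lambda>_. M))"
proof -
  have "(\<lambda>x. x i) \<in> borel_measurable (PiM I (\<lambda>_. M))" if "i \<in> I" for i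
    using measurable_component_singleton[OF that, of "\<lambda>_. M"]
    by (simp add: measurable_cong_sets[OF refl assms(2)])
  then show ?thesis
    using borel_measurable_Max[OF assms(1), of "\<lambda>i x. x i"] by blast
qed

lemma nn_integral_PiM_Max:
  fixes M :: "real measure"
  assumes "prob_space M" and I: "finite I" "I \<noteq> {}" and M: "sets M = sets borel"
  shows "(\<integral>\<^sup>+x. ennreal (Max (x ` I)) \<partial>PiM I (\<lambda>_. M))
    = (\<integral>\<^sup>+t\<in>{0<..}. ennreal (1 - measure M {..<t} ^ card I) \<partial>lborel)"
proof -
  let ?P = "PiM I (\<lambda>_. M)"
  interpret P: prob_space ?P
    using \<open>prob_space M\<close> by (rule prob_space_PiM)
  have Max_meas: "(\<lambda>x. Max (x ` I)) \<in> borel_measurable ?P"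
    using I(1) M by (rule borel_measurable_PiM_Max)
  have "emeasure ?P {x \<in> space ?P. t \<le> Max (x ` I)} = ennreal (1 - measure M {..<t} ^ card I)" for t
  proof -
    have "{x \<in> space ?P. Max (x ` I) < t} = (\<lambda>x. Max (x ` I)) -` {..<t} \<inter> space ?P"
      by auto
    then have "{x \<in> space ?P. Max (x ` I) < t} \<in> sets ?P"
      using measurable_sets[OF Max_meas, of "{..<t}"] by simp
    moreover have "{x \<in> space ?P. t \<le> Max (x ` I)} = space ?P - {x \<in> space ?P. Max (x ` I) < t}"
      by auto
    ultimately show ?thesis
      using P.prob_compl measure_PiM_Max_less[OF \<open>prob_space M\<close> I M]
      by (simp add: P.emeasure_eq_measure)
  qed
  then show ?thesis
    using P.nn_integral_eq_nn_integral_tail[OF Max_meas] by simp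
qed

lemma integrable_PiM_Max:
  fixes M :: "real measure"
  assumes "prob_space M" and I: "finite I" "I \<noteq> {}" and M: "sets M = sets borel"
    and integrable: "integrable M (\<lambda>x. x)"
  shows "integrable (PiM I (\<lambda>_. M)) (\<lambda>x. Max (x ` I))"
proof (rule Bochner_Integration.integrable_bound)
  let ?P = "PiM I (\<lambda>_. M)"
  have "integrable ?P (\<lambda>x. x i)" if "i \<in> I" for i
    using has_bochner_integral_PiM_component[OF \<open>prob_space M\<close> that measurable_ident_sets[OF M]
        has_bochner_integral_integrable[OF integrable]]
    by (rule integrable.intros)
  then show "integrable ?P (\<lambda>x. \<Sum>i\<in>I. \<bar>x i\<bar>)"
    by (intro Bochner_Integration.integrable_sum Bochner_Integration.integrable_abs)
  show "AE x in ?P. norm (Max (x ` I)) \<le> norm (\<Sum>i\<in>I. \<bar>x i\<bar>)"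
  proof (intro AE_I2)
    fix x :: "'a \<Rightarrow> real"
    have "Max (x ` I) \<in> x ` I"
      using I by (intro Max_in) auto
    then obtain j where "j \<in> I" "Max (x ` I) = x j"
      by blast
    moreover have "\<bar>x j\<bar> \<le> (\<Sum>i\<in>I. \<bar>x i\<bar>)"
      using \<open>j \<in> I\<close> I(1) by (intro member_le_sum) auto
    ultimately show "norm (Max (x ` I)) \<le> norm (\<Sum>i\<in>I. \<bar>x i\<bar>)"
      by simp
  qed
  show "(\<lambda>x. Max (x ` I)) \<in> borel_measurable ?P"
    using I(1) M by (rule borel_measurable_PiM_Max)
qed

lemma has_bochner_integral_PiM_Max:
  fixes M :: "real measure"
  assumes "prob_space M" and I: "finite I" "I \<noteq> {}" and M: "sets M = sets borel"
    and nonneg: "AE x in M. 0 \<le> x" and integrable: "integrable M (\<lambda>x. x)"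
  shows "has_bochner_integral (PiM I (\<lambda>_. M)) (\<lambda>x. Max (x ` I))
    (\<integral>t\<in>{0<..}. 1 - measure M {..<t} ^ card I \<partial>lborel)"
proof -
  interpret prob_space M by fact
  let ?P = "PiM I (\<lambda>_. M)"
  let ?tail = "\<lambda>t. indicator {0<..} t * (1 - measure M {..<t} ^ card I)"
  have "AE x in ?P. 0 \<le> Max (x ` I)"
  proof -
    obtain i where "i \<in> I"
      using I(2) by blast
    have "AE x in ?P. 0 \<le> x i"
      using AE_PiM_component[of I "\<lambda>_. M", OF \<open>prob_space M\<close> \<open>i \<in> I\<close> nonneg] .
    then show ?thesis
    proof eventually_elim
      case (elim x)
      have "x i \<le> Max (x ` I)"
        using I(1) \<open>i \<in> I\<close> by (intro Max_ge) auto
      with elim show ?case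
        by linarith
    qed
  qed
  moreover have "mono (\<lambda>t. measure M {..<t})"
    using M by (intro monoI finite_measure_mono) auto
  then have [measurable]: "(\<lambda>t. measure M {..<t}) \<in> borel_measurable borel"
    by (rule borel_measurable_mono)
  then have "(\<integral>t\<in>{0<..}. 1 - measure M {..<t} ^ card I \<partial>lborel)
      = enn2real (\<integral>\<^sup>+t. ennreal (?tail t) \<partial>lborel)"
    unfolding set_lebesgue_integral_def real_scaleR_def
    by (intro integral_eq_nn_integral) (auto simp: indicator_def intro!: power_le_one)
  moreover have "(\<integral>\<^sup>+t. ennreal (?tail t) \<partial>lborel)
      = (\<integral>\<^sup>+t\<in>{0<..}. ennreal (1 - measure M {..<t} ^ card I) \<partial>lborel)"
    by (intro nn_integral_cong) (simp add: indicator_def)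
  ultimately show ?thesis
    using nn_integral_PiM_Max[OF \<open>prob_space M\<close> I M] integrable_PiM_Max[OF assms(1-4) integrable]
      borel_measurable_PiM_Max[OF I(1) M]
    by (simp add: has_bochner_integral_iff integral_eq_nn_integral mult.commute)
qed

lemma set_integral_Ioi_real_scale:
  fixes f :: "real \<Rightarrow> 'a::{banach, second_countable_topology}"
  assumes "c > 0"
  shows "(\<integral>t\<in>{0<..}. f (c * t) \<partial>lborel) = (1 / c) *\<^sub>R (\<integral>s\<in>{0<..}. f s \<partial>lborel)"
proof -
  have "(\<integral>s\<in>{0<..}. f s \<partial>lborel) = c *\<^sub>R (\<integral>t. indicator {0<..} (0 + c * t) *\<^sub>R f (0 + c * t) \<partial>lborel)"
    unfolding set_lebesgue_integral_def
    using lborel_integral_real_affine[of c "\<lambda>s. indicator {0<..} s *\<^sub>R f s" 0] assms by simp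
  also have "(\<lambda>t. indicator {0<..} (0 + c * t) *\<^sub>R f (0 + c * t)) = (\<lambda>t. indicator {0<..} t *\<^sub>R f (c * t))"
    using assms by (auto simp: fun_eq_iff indicator_def zero_less_mult_iff)
  finally show ?thesis
    using assms by (simp add: set_lebesgue_integral_def)
qed

theorem proposition2p13:
  fixes alpha lam :: real and m :: nat
  assumes "alpha > 0" and "lam > 0" and "m \<ge> 2"
  shows "IG_max m (gamma_measure alpha lam) =
    (1 / real m) * ((1 / alpha) *
       (\<integral>t\<in>{0<..}. (1 - (lower_inc_gamma alpha t) ^ m / (Gamma alpha) ^ m) \<partial>lborel) - 1)"
proof -
  let ?D = "gamma_measure alpha lam"
  let ?P = "PiM {..<m} (\<lambda>_. ?D)"
  let ?J = "\<integral>t\<in>{0<..}. (1 - (lower_inc_gamma alpha t) ^ m / (Gamma alpha) ^ m) \<partial>lborel"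
  have D: "prob_space ?D"
    using assms(1,2) by (rule prob_space_gamma_measure)
  have mean: "has_bochner_integral ?D (\<lambda>x. x) (alpha / lam)"
    using assms(1,2) by (rule has_bochner_integral_gamma_measure_id)
  have "(\<integral>t\<in>{0<..}. 1 - measure ?D {..<t} ^ m \<partial>lborel)
      = (\<integral>t\<in>{0<..}. 1 - (lower_inc_gamma alpha (lam * t) / Gamma alpha) ^ m \<partial>lborel)"
    using assms by (intro set_lebesgue_integral_cong) (auto simp: measure_gamma_measure_lessThan)
  also have "\<dots> = ?J / lam"
    using set_integral_Ioi_real_scale[of lam "\<lambda>s. 1 - (lower_inc_gamma alpha s / Gamma alpha) ^ m"]
      assms by (simp add: power_divide)
  finally have "has_bochner_integral ?P (\<lambda>x. Max (x ` {..<m})) (?J / lam)"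
    using has_bochner_integral_PiM_Max[OF D, of "{..<m}"] assms(3) sets_gamma_measure
      AE_gamma_measure_nonneg integrable.intros[OF mean]
    by (simp add: lessThan_empty_iff)
  moreover have "0 \<in> {..<m}"
    using assms(3) by simp
  then have "has_bochner_integral ?P (\<lambda>x. x 0) (alpha / lam)"
    by (rule has_bochner_integral_PiM_component[OF D _ measurable_ident_sets[OF sets_gamma_measure] mean])
  ultimately have "IG_max m ?D = (?J / lam - alpha / lam) / (real m * (alpha / lam))"
    unfolding IG_max_def
    by (simp add: has_bochner_integral_integral_eq[OF has_bochner_integral_diff]
      has_bochner_integral_integral_eq[OF mean])
  also have "\<dots> = (1 / real m) * ((1 / alpha) * ?J - 1)"
    using assms by (simp add: field_simps)
  finally show ?thesis .
qed

end
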